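(* Let $\mathcal{P}$ be a profile of unrooted phylogenetic trees whose display graph $G(\mathcal{P})$ is connected. If $F$ is a minimal separator of $\mathrm{LG}(\mathcal{P})$, then $\mathrm{LG}(\mathcal{P})-F'$ is connected for every proper subset $F'\subset F$.
   Context: A phylogenetic tree is an unrooted tree whose leaves are bijectively labeled (leaves identified with labels; internal vertices have degree at least three). A profile $\mathcal{P}=\{T_1,\dots,T_k\}$ is a finite collection of phylogenetic trees; internal vertices of distinct trees are disjoint, while leaves with the same label are the same vertex. The display graph $G(\mathcal{P})$ has vertex set $\bigcup_i V(T_i)$ and edge set $\bigcup_i E(T_i)$. $\mathrm{LG}(\mathcal{P})$ is the line graph of $G(\mathcal{P})$ (vertices are edges of $G(\mathcal{P})$, adjacent iff they share an endpoint). In a graph $G$, for nonadjacent vertices $a,b$, an $a$-$b$ separator is $U\subset V(G)$ with $a,b$ in different components of $G-U$; it is minimal if no proper subset is an $a$-$b$ separator; a minimal separator is a minimal $a$-$b$ separator for some nonadjacent $a,b$. *)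

theory Defs
  imports Main
begin

type_synonym 'a graph = "'a set \<times> 'a set set"

definition verts :: "'a graph \<Rightarrow> 'a set" where "verts G = fst G"
definition edges :: "'a graph \<Rightarrow> 'a set set" where "edges G = snd G"

definition simple_graph :: "'a graph \<Rightarrow> bool" where
  "simple_graph G \<longleftrightarrow> (\<forall>e\<in>edges G. \<exists>u v. u \<noteq> v \<and> e = {u, v} \<and> u \<in> verts G \<and> v \<in> verts G)"

definition adj :: "'a graph \<Rightarrow> 'a \<Rightarrow> 'a \<Rightarrow> bool" where
  "adj G u v \<longleftrightarrow> u \<noteq> v \<and> {u, v} \<in> edges G"

definition reachable :: "'a graph \<Rightarrow> 'a \<Rightarrow> 'a \<Rightarrow> bool" where
  "reachable G u v \<longleftrightarrow> u \<in> verts G \<and> (u, v) \<in> {(x, y). adj G x y}\<^sup>*"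

definition connected_graph :: "'a graph \<Rightarrow> bool" where
  "connected_graph G \<longleftrightarrow> (\<forall>u\<in>verts G. \<forall>v\<in>verts G. reachable G u v)"

definition is_cycle :: "'a graph \<Rightarrow> 'a list \<Rightarrow> bool" where
  "is_cycle G cs \<longleftrightarrow> length cs \<ge> 3 \<and> distinct cs \<and> set cs \<subseteq> verts G \<and>
     (\<forall>i. Suc i < length cs \<longrightarrow> adj G (cs ! i) (cs ! Suc i)) \<and> adj G (last cs) (hd cs)"

definition is_tree :: "'a graph \<Rightarrow> bool" where
  "is_tree G \<longleftrightarrow> simple_graph G \<and> finite (verts G) \<and> verts G \<noteq> {} \<and>
     connected_graph G \<and> (\<nexists>cs. is_cycle G cs)"

definition degree :: "'a graph \<Rightarrow> 'a \<Rightarrow> nat" where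
  "degree G v = card {e \<in> edges G. v \<in> e}"

definition leaves :: "'a graph \<Rightarrow> 'a set" where
  "leaves G = {v \<in> verts G. degree G v \<le> 1}"

definition internal_verts :: "'a graph \<Rightarrow> 'a set" where
  "internal_verts G = verts G - leaves G"

text \<open>Phylogenetic tree: leaves are identified with their labels (so the labelling is the
  identity, trivially bijective); internal vertices have degree at least three.\<close>
definition phylo_tree :: "'a graph \<Rightarrow> bool" where
  "phylo_tree T \<longleftrightarrow> is_tree T \<and> (\<forall>v\<in>internal_verts T. degree T v \<ge> 3)"

text \<open>Profile: a finite collection of phylogenetic trees; two distinct trees share only
  vertices that are leaves in both (same label = same vertex), so internal vertices
  of distinct trees are disjoint.\<close>
definition profile :: "'a graph set \<Rightarrow> bool" where
  "profile P \<longleftrightarrow> finite P \<and> (\<forall>T\<in>P. phylo_tree T) \<and>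
     (\<forall>T\<in>P. \<forall>T'\<in>P. T \<noteq> T' \<longrightarrow> verts T \<inter> verts T' \<subseteq> leaves T \<inter> leaves T')"

definition display_graph :: "'a graph set \<Rightarrow> 'a graph" where
  "display_graph P = (\<Union>T\<in>P. verts T, \<Union>T\<in>P. edges T)"

definition line_graph :: "'a graph \<Rightarrow> 'a set graph" where
  "line_graph G = (edges G, {{e, f} | e f. e \<in> edges G \<and> f \<in> edges G \<and> e \<noteq> f \<and> e \<inter> f \<noteq> {}})"

definition del_verts :: "'a graph \<Rightarrow> 'a set \<Rightarrow> 'a graph" where
  "del_verts G U = (verts G - U, {e \<in> edges G. e \<inter> U = {}})"

definition separator :: "'a graph \<Rightarrow> 'a \<Rightarrow> 'a \<Rightarrow> 'a set \<Rightarrow> bool" where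
  "separator G a b U \<longleftrightarrow> U \<subseteq> verts G \<and> a \<in> verts G - U \<and> b \<in> verts G - U \<and>
     \<not> reachable (del_verts G U) a b"

definition minimal_ab_separator :: "'a graph \<Rightarrow> 'a \<Rightarrow> 'a \<Rightarrow> 'a set \<Rightarrow> bool" where
  "minimal_ab_separator G a b U \<longleftrightarrow> separator G a b U \<and> (\<forall>W. W \<subset> U \<longrightarrow> \<not> separator G a b W)"

definition minimal_separator :: "'a graph \<Rightarrow> 'a set \<Rightarrow> bool" where
  "minimal_separator G U \<longleftrightarrow> (\<exists>a b. a \<in> verts G \<and> b \<in> verts G \<and> a \<noteq> b \<and> \<not> adj G a b \<and>
     minimal_ab_separator G a b U)"

end

theory Submission
  imports Defs
begin

text \<open>Only the simplicity of the display graph \<open>G\<close> matters. Let \<open>F\<close> be a minimal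
  \<open>a\<close>-\<open>b\<close> separator of the line graph \<open>L\<close> of \<open>G\<close>, and \<open>A\<close>, \<open>B\<close> the components of \<open>a\<close>
  and \<open>b\<close> in \<open>L - F\<close>. By minimality every edge \<open>f \<in> F\<close> is adjacent to both \<open>A\<close> and \<open>B\<close>;
  as \<open>A\<close> and \<open>B\<close> share no vertex of \<open>G\<close>, they meet \<open>f\<close> in its two distinct endpoints, so
  every edge of \<open>G\<close> at \<open>f\<close> lies in \<open>A \<union> B \<union> F\<close>. Connectivity of \<open>G\<close> then leaves no room for
  a third component of \<open>L - F\<close>, and any edge of \<open>F - F'\<close> reconnects \<open>A\<close> and \<open>B\<close>
  in \<open>L - F'\<close>.\<close>

lemma adj_sym: "adj H u v \<Longrightarrow> adj H v u"
  unfolding adj_def by (auto simp: insert_commute)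

lemma simple_graph_adj_verts:
  assumes "simple_graph H" "adj H u v"
  shows "u \<in> verts H" "v \<in> verts H"
  using assms unfolding simple_graph_def adj_def by (auto simp: doubleton_eq_iff)

lemma simple_graph_edge_verts:
  assumes "simple_graph G" "e \<in> edges G"
  obtains u v where "u \<noteq> v" "e = {u, v}" "u \<in> verts G" "v \<in> verts G"
  using assms unfolding simple_graph_def by blast

lemma reachable_refl: "u \<in> verts H \<Longrightarrow> reachable H u u"
  unfolding reachable_def by simp

lemma reachable_adj: "reachable H u v \<Longrightarrow> adj H v w \<Longrightarrow> reachable H u w"
  unfolding reachable_def by (auto intro: rtrancl_into_rtrancl)

lemma reachable_trans: "reachable H u v \<Longrightarrow> reachable H v w \<Longrightarrow> reachable H u w"
  unfolding reachable_def by (auto intro: rtrancl_trans)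

lemma reachable_in_verts:
  assumes "simple_graph H" "reachable H u v"
  shows "v \<in> verts H"
proof -
  have "(u, v) \<in> {(x, y). adj H x y}\<^sup>*" "u \<in> verts H"
    using assms(2) unfolding reachable_def by auto
  then show ?thesis
    by induction (use simple_graph_adj_verts[OF assms(1)] in auto)
qed

lemma reachable_sym:
  assumes "simple_graph H" "reachable H u v"
  shows "reachable H v u"
proof -
  have "sym {(x, y). adj H x y}"
    by (auto simp: sym_def intro: adj_sym)
  then have "(v, u) \<in> {(x, y). adj H x y}\<^sup>*"
    using assms(2) sym_rtrancl unfolding reachable_def by (blast dest: symD)
  then show ?thesis
    using reachable_in_verts[OF assms] unfolding reachable_def by simp
qed

lemma connected_graphI:
  assumes "simple_graph H" "a \<in> verts H" "\<And>v. v \<in> verts H \<Longrightarrow> reachable H a v"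
  shows "connected_graph H"
  unfolding connected_graph_def
proof (intro ballI)
  fix u v assume "u \<in> verts H" "v \<in> verts H"
  then show "reachable H u v"
    using reachable_trans[OF reachable_sym[OF assms(1) assms(3)] assms(3)] by blast
qed

definition component :: "'a graph \<Rightarrow> 'a \<Rightarrow> 'a set" where
  "component H v = {w. reachable H v w}"

lemma verts_del_verts: "verts (del_verts H U) = verts H - U"
  unfolding del_verts_def verts_def by simp

lemma adj_del_verts: "adj (del_verts H U) u v \<longleftrightarrow> adj H u v \<and> u \<notin> U \<and> v \<notin> U"
  unfolding adj_def del_verts_def edges_def by auto

lemma simple_graph_del_verts: "simple_graph H \<Longrightarrow> simple_graph (del_verts H U)"
  unfolding simple_graph_def del_verts_def verts_def edges_def by fastforce

lemma reachable_del_verts_notin: "reachable (del_verts H U) u v \<Longrightarrow> v \<notin> U"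
  unfolding reachable_def verts_del_verts
  by (auto elim: rtrancl.cases simp: adj_del_verts)

lemma reachable_del_verts_antimono:
  assumes "U' \<subseteq> U" "reachable (del_verts H U) u v"
  shows "reachable (del_verts H U') u v"
proof -
  have "{(x, y). adj (del_verts H U) x y} \<subseteq> {(x, y). adj (del_verts H U') x y}"
    using assms(1) by (auto simp: adj_del_verts)
  then show ?thesis
    using assms rtrancl_mono unfolding reachable_def verts_del_verts by blast
qed

text \<open>A path avoiding \<open>U - {f}\<close> either avoids \<open>U\<close>, or its part before the
  first visit of \<open>f\<close> ends in a neighbour of \<open>f\<close>.\<close>
lemma reachable_del_verts_remove:
  assumes "reachable (del_verts H (U - {f})) a v" "a \<notin> U"
  shows "reachable (del_verts H U) a v \<or> (\<exists>w. reachable (del_verts H U) a w \<and> adj H w f)"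
proof -
  have a: "a \<in> verts H - U"
    using assms unfolding reachable_def verts_del_verts by auto
  have "(a, v) \<in> {(x, y). adj (del_verts H (U - {f})) x y}\<^sup>*"
    using assms(1) unfolding reachable_def by simp
  then show ?thesis
  proof induction
    case base
    then show ?case using a reachable_refl[of a "del_verts H U"] by (simp add: verts_del_verts)
  next
    case (step y z)
    show ?case
    proof (cases "reachable (del_verts H U) a y")
      case True
      have "y \<notin> U" using True by (rule reachable_del_verts_notin)
      then have "adj H y z" "z = f \<or> adj (del_verts H U) y z"
        using step(2) by (auto simp: adj_del_verts)
      then show ?thesis
        using True reachable_adj[OF True, of z] by metis
    next
      case False
      then show ?thesis using step(3) by blast
    qed
  qed
qed

lemma separator_sym: "simple_graph H \<Longrightarrow> separator H a b U \<Longrightarrow> separator H b a U"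
  unfolding separator_def by (metis reachable_sym simple_graph_del_verts)

lemma minimal_ab_separator_sym:
  "simple_graph H \<Longrightarrow> minimal_ab_separator H a b F \<Longrightarrow> minimal_ab_separator H b a F"
  unfolding minimal_ab_separator_def by (metis separator_sym)

lemma separator_components_disjoint:
  assumes "simple_graph H" "separator H a b U"
  shows "component (del_verts H U) a \<inter> component (del_verts H U) b = {}"
proof -
  have "\<not> reachable (del_verts H U) a w \<or> \<not> reachable (del_verts H U) b w" for w
    using assms reachable_trans reachable_sym[OF simple_graph_del_verts[OF assms(1)]]
    unfolding separator_def by metis
  then show ?thesis unfolding component_def by blast
qed

lemma component_del_verts_adj:
  assumes "w \<in> component (del_verts H U) a" "adj H w v" "v \<notin> U"
  shows "v \<in> component (del_verts H U) a"
proof -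
  have reach: "reachable (del_verts H U) a w" using assms(1) unfolding component_def by simp
  then have "w \<notin> U" by (rule reachable_del_verts_notin)
  then have "adj (del_verts H U) w v" using assms(2,3) by (simp add: adj_del_verts)
  then show ?thesis using reachable_adj[OF reach] unfolding component_def by simp
qed

lemma minimal_ab_separator_adj_component:
  assumes "minimal_ab_separator H a b F" "f \<in> F"
  shows "\<exists>w \<in> component (del_verts H F) a. adj H w f"
proof -
  have sep: "separator H a b F" and "\<not> separator H a b (F - {f})"
    using assms unfolding minimal_ab_separator_def by auto
  then have "reachable (del_verts H (F - {f})) a b"
    unfolding separator_def by auto
  moreover have "\<not> reachable (del_verts H F) a b" "a \<notin> F"
    using sep unfolding separator_def by auto
  ultimately show ?thesis
    using reachable_del_verts_remove unfolding component_def by fastforce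
qed

text \<open>Each vertex of \<open>F - F'\<close> is adjacent to both sides, so it glues them together.\<close>
lemma connected_del_verts_psubset_minimal_ab_separator:
  assumes H: "simple_graph H" and F: "minimal_ab_separator H a b F"
    and two: "verts H - F \<subseteq> component (del_verts H F) a \<union> component (del_verts H F) b"
    and "F' \<subset> F"
  shows "connected_graph (del_verts H F')"
proof -
  let ?H' = "del_verts H F'"
  have H': "simple_graph ?H'" using H by (rule simple_graph_del_verts)
  have "F' \<subseteq> F" using \<open>F' \<subset> F\<close> by blast
  have "a \<in> verts H - F" using F unfolding minimal_ab_separator_def separator_def by blast
  then have a: "a \<in> verts ?H'" using \<open>F' \<subseteq> F\<close> unfolding verts_del_verts by blast
  have lift: "reachable ?H' u v" if "v \<in> component (del_verts H F) u" for u v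
    using that reachable_del_verts_antimono[OF \<open>F' \<subseteq> F\<close>] unfolding component_def by simp
  have adj_lift: "adj ?H' w f" if "w \<in> component (del_verts H F) c" "adj H w f" "f \<notin> F'" for w c f
  proof -
    have "w \<notin> F" using that(1) reachable_del_verts_notin unfolding component_def by simp
    then show ?thesis using that(2,3) \<open>F' \<subseteq> F\<close> by (auto simp: adj_del_verts)
  qed
  have sep_vertex: "reachable ?H' a f" if f: "f \<in> F - F'" for f
  proof -
    obtain w where w: "w \<in> component (del_verts H F) a" "adj H w f"
      using minimal_ab_separator_adj_component[OF F] f by blast
    show ?thesis using reachable_adj[OF lift[OF w(1)] adj_lift[OF w]] f by blast
  qed
  obtain f0 where f0: "f0 \<in> F - F'" using \<open>F' \<subset> F\<close> by blast
  have far_side: "reachable ?H' a v" if v: "v \<in> component (del_verts H F) b" for v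
  proof -
    obtain w where w: "w \<in> component (del_verts H F) b" "adj H w f0"
      using minimal_ab_separator_adj_component[OF minimal_ab_separator_sym[OF H F]] f0 by blast
    have "reachable ?H' w a"
      using reachable_sym[OF H' reachable_adj[OF sep_vertex[OF f0] adj_sym[OF adj_lift[OF w]]]]
        f0 by blast
    moreover have "reachable ?H' w v"
      using reachable_trans[OF reachable_sym[OF H' lift[OF w(1)]] lift[OF v]] .
    ultimately show ?thesis using reachable_trans reachable_sym[OF H'] by metis
  qed
  show ?thesis
  proof (rule connected_graphI[OF H' a])
    fix v assume "v \<in> verts ?H'"
    then consider "v \<in> component (del_verts H F) a" | "v \<in> component (del_verts H F) b"
      | "v \<in> F - F'"
      using two unfolding verts_del_verts by blast
    then show "reachable ?H' a v" using lift far_side sep_vertex by cases blast+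
  qed
qed

lemma verts_line_graph: "verts (line_graph G) = edges G"
  unfolding line_graph_def verts_def by simp

lemma adj_line_graph:
  "adj (line_graph G) e f \<longleftrightarrow> e \<noteq> f \<and> e \<in> edges G \<and> f \<in> edges G \<and> e \<inter> f \<noteq> {}"
  unfolding adj_def line_graph_def edges_def by (auto simp: doubleton_eq_iff)

lemma simple_graph_line_graph: "simple_graph (line_graph G)"
  unfolding simple_graph_def line_graph_def verts_def edges_def by auto

lemma connected_graph_edges_closed:
  assumes G: "simple_graph G" "connected_graph G"
    and Y: "y \<in> Y" "Y \<subseteq> edges G" "\<And>x y. x \<in> edges G - Y \<Longrightarrow> y \<in> Y \<Longrightarrow> x \<inter> y = {}"
  shows "Y = edges G"
proof (rule ccontr)
  assume "Y \<noteq> edges G"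
  then obtain x where x: "x \<in> edges G - Y" using Y(2) by blast
  obtain z where z: "z \<in> y" "z \<in> verts G"
    using simple_graph_edge_verts[OF G(1)] Y(1,2) by (metis insertI1 subsetD)
  obtain w where w: "w \<in> x" "w \<in> verts G"
    using simple_graph_edge_verts[OF G(1)] x by (metis DiffD1 insertI1)
  have "(z, w) \<in> {(u, v). adj G u v}\<^sup>*"
    using G(2) z(2) w(2) unfolding connected_graph_def reachable_def by simp
  then have "w \<in> \<Union>Y"
  proof induction
    case base
    then show ?case using z(1) Y(1) by blast
  next
    case (step u v)
    then obtain y' where y': "y' \<in> Y" "u \<in> y'" by blast
    have "{u, v} \<in> edges G" using step(2) unfolding adj_def by simp
    moreover have "{u, v} \<inter> y' \<noteq> {}" using y'(2) by blast
    ultimately have "{u, v} \<in> Y" using Y(3)[OF _ y'(1)] by blast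
    then show ?case by blast
  qed
  then obtain y' where "y' \<in> Y" "w \<in> y'" by blast
  then show False using Y(3)[OF x] w(1) by blast
qed

lemma component_line_graph_meet:
  assumes "w \<in> component (del_verts (line_graph G) U) a" "g \<in> edges G - U" "w \<inter> g \<noteq> {}"
  shows "g \<in> component (del_verts (line_graph G) U) a"
proof (cases "w = g")
  case False
  have "w \<in> edges G"
    using assms(1) reachable_in_verts[OF simple_graph_del_verts[OF simple_graph_line_graph]]
    unfolding component_def verts_del_verts verts_line_graph by blast
  then have "adj (line_graph G) w g" using False assms(2,3) by (simp add: adj_line_graph)
  then show ?thesis using assms(2) by (intro component_del_verts_adj[OF assms(1)]) simp_all
qed (use assms in simp)

text \<open>The neighbours of \<open>f = {x, y}\<close> on the two sides of the separator meet \<open>f\<close> in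
  different endpoints, so every other edge at \<open>f\<close> meets one of them.\<close>
lemma line_graph_minimal_ab_separator_edge_at_separator:
  assumes G: "simple_graph G" and F: "minimal_ab_separator (line_graph G) a b F"
    and f: "f \<in> F" and g: "g \<in> edges G - F" "f \<inter> g \<noteq> {}"
  shows "g \<in> component (del_verts (line_graph G) F) a \<union> component (del_verts (line_graph G) F) b"
proof -
  let ?C = "component (del_verts (line_graph G) F)"
  obtain wa where wa: "wa \<in> ?C a" "adj (line_graph G) wa f"
    using minimal_ab_separator_adj_component[OF F f] by blast
  obtain wb where wb: "wb \<in> ?C b" "adj (line_graph G) wb f"
    using minimal_ab_separator_adj_component[OF minimal_ab_separator_sym[OF simple_graph_line_graph F] f]
    by blast
  have sep: "separator (line_graph G) a b F" using F unfolding minimal_ab_separator_def by simp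
  then have "?C a \<inter> ?C b = {}" by (rule separator_components_disjoint[OF simple_graph_line_graph])
  moreover have "wb \<in> edges G - F"
    using wb(2) reachable_del_verts_notin wb(1) unfolding adj_line_graph component_def by simp
  ultimately have "wa \<inter> wb = {}" using component_line_graph_meet[OF wa(1)] wb(1) by blast
  moreover have "f \<in> edges G"
    using sep f unfolding separator_def verts_line_graph by blast
  then obtain x y where "f = {x, y}" using simple_graph_edge_verts[OF G] by metis
  moreover have "wa \<inter> f \<noteq> {}" "wb \<inter> f \<noteq> {}" using wa(2) wb(2) by (simp_all add: adj_line_graph)
  ultimately have "wa \<inter> g \<noteq> {} \<or> wb \<inter> g \<noteq> {}" using g(2) by blast
  then show ?thesis using component_line_graph_meet g(1) wa(1) wb(1) by blast
qed

lemma line_graph_minimal_ab_separator_two_components: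
  assumes G: "simple_graph G" "connected_graph G"
    and F: "minimal_ab_separator (line_graph G) a b F"
  shows "edges G - F \<subseteq>
    component (del_verts (line_graph G) F) a \<union> component (del_verts (line_graph G) F) b"
    (is "_ \<subseteq> ?S")
proof -
  have sep: "F \<subseteq> edges G" "a \<in> edges G - F"
    using F unfolding minimal_ab_separator_def separator_def verts_line_graph by auto
  have "a \<in> ?S"
    using sep(2) reachable_refl[of a "del_verts (line_graph G) F"]
    unfolding component_def verts_del_verts verts_line_graph by simp
  have closed: "x \<inter> y = {}" if x: "x \<in> edges G - (edges G - (?S \<union> F))"
    and y: "y \<in> edges G - (?S \<union> F)" for x y
  proof (rule ccontr)
    assume meet: "x \<inter> y \<noteq> {}"
    have y': "y \<in> edges G - F" using y by blast
    have "y \<in> ?S"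
    proof (cases "x \<in> F")
      case True
      then show ?thesis
        using line_graph_minimal_ab_separator_edge_at_separator[OF G(1) F True y'] meet
        by blast
    next
      case False
      then have "x \<in> ?S" using x by blast
      then show ?thesis using component_line_graph_meet[OF _ y' meet] by blast
    qed
    then show False using y by blast
  qed
  have "edges G - (?S \<union> F) = {}"
  proof (rule ccontr)
    assume "edges G - (?S \<union> F) \<noteq> {}"
    then obtain y where "y \<in> edges G - (?S \<union> F)" by blast
    from connected_graph_edges_closed[OF G this Diff_subset closed]
    have "edges G - (?S \<union> F) = edges G" .
    then show False using \<open>a \<in> ?S\<close> sep(2) by blast
  qed
  then show ?thesis by blast
qed

lemma simple_graph_display_graph:
  assumes "profile P"
  shows "simple_graph (display_graph P)"
  unfolding simple_graph_def
proof
  fix e assume "e \<in> edges (display_graph P)"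
  then obtain T where T: "T \<in> P" "e \<in> edges T"
    unfolding display_graph_def edges_def by auto
  have "simple_graph T" using assms T(1) unfolding profile_def phylo_tree_def is_tree_def by simp
  then obtain u v where "u \<noteq> v" "e = {u, v}" "u \<in> verts T" "v \<in> verts T"
    using T(2) by (rule simple_graph_edge_verts)
  moreover have "verts T \<subseteq> verts (display_graph P)"
    using T(1) unfolding display_graph_def verts_def by auto
  ultimately show "\<exists>u v. u \<noteq> v \<and> e = {u, v} \<and> u \<in> verts (display_graph P) \<and> v \<in> verts (display_graph P)"
    by blast
qed

theorem corollary1:
  fixes P :: "'a graph set" and F :: "'a set set"
  assumes "profile P"
    and "connected_graph (display_graph P)"
    and "minimal_separator (line_graph (display_graph P)) F"
  shows "\<forall>F'. F' \<subset> F \<longrightarrow> connected_graph (del_verts (line_graph (display_graph P)) F')"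
proof (intro allI impI)
  fix F' assume "F' \<subset> F"
  let ?G = "display_graph P"
  have G: "simple_graph ?G" using assms(1) by (rule simple_graph_display_graph)
  obtain a b where F: "minimal_ab_separator (line_graph ?G) a b F"
    using assms(3) unfolding minimal_separator_def by blast
  have "verts (line_graph ?G) - F \<subseteq>
      component (del_verts (line_graph ?G) F) a \<union> component (del_verts (line_graph ?G) F) b"
    using line_graph_minimal_ab_separator_two_components[OF G assms(2) F]
    unfolding verts_line_graph .
  from connected_del_verts_psubset_minimal_ab_separator[OF simple_graph_line_graph F this \<open>F' \<subset> F\<close>]
  show "connected_graph (del_verts (line_graph ?G) F')" .
qed

end
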